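(* Let $0\le a<b$ and $1<\alpha\le 2$. Define $G:[a,b]\times[a,b]\to\mathbb{R}$ by $$G(t,s)=\begin{cases}\dfrac{b-t}{b-a}\big[(\alpha-1)(s-a)-2+\alpha\big], & a\le s\le t\le b,\\[2mm] \dfrac{t-a}{b-a}\big[(\alpha-1)(b-s)+2-\alpha\big], & a\le t\le s\le b.\end{cases}$$ Then: (i) if $b-a<\frac{2-\alpha}{\alpha-1}$, then $\displaystyle\max_{(t,s)\in[a,b]\times[a,b]}|G(t,s)|=2-\alpha$; (ii) if $b-a\ge\frac{2-\alpha}{\alpha-1}$, then $\displaystyle\max_{(t,s)\in[a,b]\times[a,b]}|G(t,s)|=\frac{[(\alpha-1)(b-a)+(2-\alpha)]^2}{4(\alpha-1)(b-a)}$.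
   Context: The function $G$ is the Green's function of the boundary value problem ${}^{CF}D_a^{\alpha}u(t)+q(t)u(t)=0$, $a<t<b$, $u(a)=u(b)=0$, with the Caputo–Fabrizio derivative of order $\alpha$; the statement itself only concerns the explicitly defined function $G$. *)

theory Defs
  imports Complex_Main
begin

text \<open>On the diagonal s = t the two case formulas of the paper differ; we use the
  second formula there (t \<le> s), the first one for s < t.\<close>
definition cfG :: "real \<Rightarrow> real \<Rightarrow> real \<Rightarrow> real \<Rightarrow> real \<Rightarrow> real" where
  "cfG a b \<alpha> t s =
     (if t \<le> s then (t - a) / (b - a) * ((\<alpha> - 1) * (b - s) + 2 - \<alpha>)
      else (b - t) / (b - a) * ((\<alpha> - 1) * (s - a) - 2 + \<alpha>))"

definition is_max_absG :: "real \<Rightarrow> real \<Rightarrow> real \<Rightarrow> real \<Rightarrow> bool" where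
  "is_max_absG a b \<alpha> M \<longleftrightarrow>
     (\<forall>t\<in>{a..b}. \<forall>s\<in>{a..b}. \<bar>cfG a b \<alpha> t s\<bar> \<le> M) \<and>
     (\<exists>t\<in>{a..b}. \<exists>s\<in>{a..b}. \<bar>cfG a b \<alpha> t s\<bar> = M)"

end

theory Submission
  imports Defs
begin

text \<open>For fixed t, G(t,s) decreases in s on [t,b] and increases in s on [a,t), where it stays
  below G(t,t) and above -(2 - \<alpha>). Hence |G| is bounded by the maximum of 2 - \<alpha> and the
  diagonal G(t,t), a concave quadratic in t with G(b,b) = 2 - \<alpha>. Its vertex lies in [a,b]
  exactly when b - a \<ge> (2 - \<alpha>)/(\<alpha> - 1); otherwise the diagonal is maximal at t = b.\<close>

lemma cfG_diag:
  "cfG a b \<alpha> t t = (t - a) * ((\<alpha> - 1) * ((b - a) - (t - a)) + (2 - \<alpha>)) / (b - a)"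
proof -
  have "(\<alpha> - 1) * (b - t) + 2 - \<alpha> = (\<alpha> - 1) * ((b - a) - (t - a)) + (2 - \<alpha>)"
    by simp
  then show ?thesis
    unfolding cfG_def by simp
qed

lemma cfG_le_diag:
  fixes a b \<alpha> t s :: real
  assumes "a < b" "1 \<le> \<alpha>" "\<alpha> \<le> 2" "t \<in> {a..b}" "s \<in> {a..b}"
  shows "cfG a b \<alpha> t s \<le> cfG a b \<alpha> t t"
proof (cases "t \<le> s")
  case True
  have "(\<alpha> - 1) * (b - s) \<le> (\<alpha> - 1) * (b - t)"
    using assms True by (intro mult_left_mono) auto
  then have "(t - a) / (b - a) * ((\<alpha> - 1) * (b - s) + 2 - \<alpha>)
           \<le> (t - a) / (b - a) * ((\<alpha> - 1) * (b - t) + 2 - \<alpha>)"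
    using assms by (intro mult_left_mono) auto
  then show ?thesis
    using True by (simp add: cfG_def)
next
  case False
  have "(\<alpha> - 1) * (s - a) \<le> (\<alpha> - 1) * (t - a)"
    using assms False by (intro mult_left_mono) auto
  then have "(b - t) / (b - a) * ((\<alpha> - 1) * (s - a) - 2 + \<alpha>)
           \<le> (b - t) / (b - a) * ((\<alpha> - 1) * (t - a) - 2 + \<alpha>)"
    using assms by (intro mult_left_mono) auto
  also have "\<dots> \<le> (t - a) / (b - a) * ((\<alpha> - 1) * (b - t) + 2 - \<alpha>)"
  proof -
    have "(t - a) * ((\<alpha> - 1) * (b - t) + 2 - \<alpha>) - (b - t) * ((\<alpha> - 1) * (t - a) - 2 + \<alpha>)
          = (2 - \<alpha>) * (b - a)"
      by (simp add: algebra_simps)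
    moreover have "0 \<le> (2 - \<alpha>) * (b - a)"
      using assms by simp
    ultimately have "(b - t) * ((\<alpha> - 1) * (t - a) - 2 + \<alpha>)
                   \<le> (t - a) * ((\<alpha> - 1) * (b - t) + 2 - \<alpha>)"
      by linarith
    then show ?thesis
      using assms by (simp add: divide_right_mono)
  qed
  finally show ?thesis
    using False by (simp add: cfG_def)
qed

lemma cfG_ge:
  fixes a b \<alpha> t s :: real
  assumes "a < b" "1 \<le> \<alpha>" "\<alpha> \<le> 2" "t \<in> {a..b}" "s \<in> {a..b}"
  shows "- (2 - \<alpha>) \<le> cfG a b \<alpha> t s"
proof (cases "t \<le> s")
  case True
  have "0 \<le> (\<alpha> - 1) * (b - s)"
    using assms by simp
  then have "0 \<le> (\<alpha> - 1) * (b - s) + 2 - \<alpha>"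
    using assms by linarith
  then have "0 \<le> (t - a) / (b - a) * ((\<alpha> - 1) * (b - s) + 2 - \<alpha>)"
    using assms by simp
  then show ?thesis
    using True assms by (simp add: cfG_def)
next
  case False
  define q where "q = (b - t) / (b - a)"
  define \<beta> where "\<beta> = (\<alpha> - 1) * (s - a) - 2 + \<alpha>"
  have q: "0 \<le> q" "q \<le> 1"
    using assms by (auto simp: q_def)
  have "- (2 - \<alpha>) \<le> min 0 \<beta>"
    using assms by (simp add: \<beta>_def)
  also have "min 0 \<beta> \<le> q * \<beta>"
    using q by (cases "0 \<le> \<beta>") (auto simp: mult_le_cancel_right1)
  also have "q * \<beta> = cfG a b \<alpha> t s"
    using False by (simp add: cfG_def q_def \<beta>_def)
  finally show ?thesis .
qed

lemma abs_cfG_le: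
  fixes a b \<alpha> t s :: real
  assumes "a < b" "1 \<le> \<alpha>" "\<alpha> \<le> 2" "t \<in> {a..b}" "s \<in> {a..b}"
  shows "\<bar>cfG a b \<alpha> t s\<bar> \<le> max (2 - \<alpha>) (cfG a b \<alpha> t t)"
  using cfG_le_diag[OF assms] cfG_ge[OF assms] by linarith

lemma is_max_absG_if_diag_attains:
  fixes a b \<alpha> M t\<^sub>0 :: real
  assumes "a < b" "1 \<le> \<alpha>" "\<alpha> \<le> 2" "2 - \<alpha> \<le> M"
    and "\<forall>t\<in>{a..b}. cfG a b \<alpha> t t \<le> M"
    and "t\<^sub>0 \<in> {a..b}" "cfG a b \<alpha> t\<^sub>0 t\<^sub>0 = M"
  shows "is_max_absG a b \<alpha> M"
  unfolding is_max_absG_def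
proof (intro conjI ballI)
  fix t s assume "t \<in> {a..b}" "s \<in> {a..b}"
  then have "\<bar>cfG a b \<alpha> t s\<bar> \<le> max (2 - \<alpha>) (cfG a b \<alpha> t t)"
    using abs_cfG_le assms by blast
  also have "\<dots> \<le> M"
    using assms \<open>t \<in> {a..b}\<close> by simp
  finally show "\<bar>cfG a b \<alpha> t s\<bar> \<le> M" .
next
  show "\<exists>t\<in>{a..b}. \<exists>s\<in>{a..b}. \<bar>cfG a b \<alpha> t s\<bar> = M"
    using assms by (intro bexI[of _ t\<^sub>0]) auto
qed

lemma concave_quadratic_le_vertex_value:
  fixes c d L x :: real
  assumes "0 < c" "0 < L"
  shows "x * (c * (L - x) + d) / L \<le> (c * L + d)\<^sup>2 / (4 * c * L)"
proof -
  have "(c * L + d)\<^sup>2 - 4 * c * (x * (c * (L - x) + d)) = (2 * c * x - (c * L + d))\<^sup>2"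
    by (simp add: power2_eq_square algebra_simps)
  then have "4 * c * (x * (c * (L - x) + d)) \<le> (c * L + d)\<^sup>2"
    by (metis diff_ge_0_iff_ge zero_le_power2)
  then have "4 * c * (x * (c * (L - x) + d)) / (4 * c * L) \<le> (c * L + d)\<^sup>2 / (4 * c * L)"
    using assms by (intro divide_right_mono) auto
  then show ?thesis
    using assms by simp
qed

lemma concave_quadratic_vertex_value:
  fixes c d L :: real
  assumes "0 < c" "0 < L"
  defines "x \<equiv> (c * L + d) / (2 * c)"
  shows "x * (c * (L - x) + d) / L = (c * L + d)\<^sup>2 / (4 * c * L)"
  using assms by (simp add: field_simps power2_eq_square)

lemma concave_quadratic_le_endpoint_value:
  fixes c d L x :: real
  assumes "0 \<le> c" "0 < L" "c * L \<le> d" "x \<in> {0..L}"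
  shows "x * (c * (L - x) + d) / L \<le> d"
proof -
  have "c * x \<le> c * L"
    using assms by (simp add: mult_left_mono)
  then have "0 \<le> (L - x) * (d - c * x)"
    using assms by simp
  moreover have "d * L - x * (c * (L - x) + d) = (L - x) * (d - c * x)"
    by (simp add: algebra_simps)
  ultimately show ?thesis
    using assms by (simp add: divide_le_eq mult.commute)
qed

lemma endpoint_value_le_vertex_value:
  fixes c d L :: real
  assumes "0 < c" "0 < L"
  shows "d \<le> (c * L + d)\<^sup>2 / (4 * c * L)"
proof -
  have "(c * L + d)\<^sup>2 - d * (4 * c * L) = (c * L - d)\<^sup>2"
    by (simp add: power2_eq_square algebra_simps)
  then have "d * (4 * c * L) \<le> (c * L + d)\<^sup>2"
    by (metis diff_ge_0_iff_ge zero_le_power2)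
  then show ?thesis
    using assms by (simp add: le_divide_eq)
qed

theorem proposition1:
  fixes a b \<alpha> :: real
  assumes "0 \<le> a" "a < b" "1 < \<alpha>" "\<alpha> \<le> 2"
  shows "(b - a < (2 - \<alpha>) / (\<alpha> - 1) \<longrightarrow> is_max_absG a b \<alpha> (2 - \<alpha>))
       \<and> (b - a \<ge> (2 - \<alpha>) / (\<alpha> - 1) \<longrightarrow>
            is_max_absG a b \<alpha> (((\<alpha> - 1) * (b - a) + (2 - \<alpha>))\<^sup>2 / (4 * (\<alpha> - 1) * (b - a))))"
proof -
  have c: "0 < \<alpha> - 1" and L: "0 < b - a"
    using assms by auto
  let ?M = "((\<alpha> - 1) * (b - a) + (2 - \<alpha>))\<^sup>2 / (4 * (\<alpha> - 1) * (b - a))"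
  show ?thesis
  proof (intro conjI impI)
    assume "b - a < (2 - \<alpha>) / (\<alpha> - 1)"
    then have "(\<alpha> - 1) * (b - a) \<le> 2 - \<alpha>"
      using c by (simp add: field_simps)
    then have "\<forall>t\<in>{a..b}. cfG a b \<alpha> t t \<le> 2 - \<alpha>"
      using concave_quadratic_le_endpoint_value[of "\<alpha> - 1" "b - a" "2 - \<alpha>" "t - a" for t] c L
      by (simp add: cfG_diag)
    then show "is_max_absG a b \<alpha> (2 - \<alpha>)"
      using assms by (intro is_max_absG_if_diag_attains[where t\<^sub>0 = b]) (auto simp: cfG_def)
  next
    assume "(2 - \<alpha>) / (\<alpha> - 1) \<le> b - a"
    then have "2 - \<alpha> \<le> (\<alpha> - 1) * (b - a)"
      using c by (simp add: field_simps)
    define x where "x = ((\<alpha> - 1) * (b - a) + (2 - \<alpha>)) / (2 * (\<alpha> - 1))"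
    have "a + x \<in> {a..b}"
      using c assms \<open>2 - \<alpha> \<le> (\<alpha> - 1) * (b - a)\<close> by (simp add: x_def field_simps)
    moreover have "cfG a b \<alpha> (a + x) (a + x) = ?M"
      using concave_quadratic_vertex_value[OF c L] by (simp add: cfG_diag x_def)
    moreover have "\<forall>t\<in>{a..b}. cfG a b \<alpha> t t \<le> ?M"
      using concave_quadratic_le_vertex_value[OF c L, of "t - a" "2 - \<alpha>" for t]
      by (simp add: cfG_diag)
    moreover have "2 - \<alpha> \<le> ?M"
      using endpoint_value_le_vertex_value[OF c L] by simp
    ultimately show "is_max_absG a b \<alpha> ?M"
      using assms by (intro is_max_absG_if_diag_attains) auto
  qed
qed

end
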